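(* Let $N\ge 1$ be an integer, $\mathbb{X}=L^2(\mathbb{R}^N)$ with norm $\|\cdot\|$, $\tau>0$, and $\mathcal{C}=C([-\tau,0],\mathbb{X})$ with norm $\|\phi\|_{\mathcal{C}}=\sup_{\theta\in[-\tau,0]}\|\phi(\theta)\|$. Let $\mu,\sigma,\iota>0$, $g\in\mathbb{X}$, and let $f:\mathbb{X}\to\mathbb{X}$ be bounded, i.e. there is a constant $\bar N>0$ with $\|f(\psi)\|\le \bar N$ for all $\psi$. Let $S(t)$ be the semigroup on $\mathbb{X}$ given by $S(0)\phi=\phi$ and $$S(t)[\phi](x)=\frac{e^{-\mu t}}{(4\pi t)^{N/2}}\int_{\mathbb{R}^N}\phi(y)e^{-\frac{|x-y|^2}{4t}}\,dy,\quad t>0,$$ (the semigroup generated by $\Delta-\mu I$), and let $H:\mathbb{X}\to\mathbb{X}$ be $H(\phi)(x)=\int_{\mathbb{R}^N}\Gamma_\iota(x-y)\phi(y)\,dy$ with $\Gamma_\iota(x)=(4\pi\iota)^{-N/2}e^{-|x|^2/(4\iota)}$. For $\phi\in\mathcal{C}$ let $u=u^\phi$ be the (unique, globally defined) solution of the integral equation $$u(t)=S(t)\phi(0)+\sigma\int_0^t S(t-s)u(s-\tau)\,ds+\int_0^t S(t-s)\big[H(f(u(s-\tau)))+g\big]\,ds,\ t>0,\qquad u_0=\phi,$$ (the mild form of $\partial_t u=\Delta u-\mu u+\sigma u(t-\tau)+\int_{\mathbb{R}^N}\Gamma_\iota(x-y)f(u(y,t-\tau))\,dy+g(x)$), and define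 $\Phi(t):\mathcal{C}\to\mathcal{C}$ by $\Phi(t)\phi=u^\phi_t$, where $u_t(\theta)=u(t+\theta)$, $\theta\in[-\tau,0]$. Assume $\sigma e^{\mu\tau}-\mu<0$. Then, with $M=\bar N+\|g\|$, the set $$\mathcal{B}=\left\{\phi\in\mathcal{C}:\ \|\phi\|_{\mathcal{C}}\le 2\left(\frac{M}{\mu}+\frac{M\sigma e^{\mu\tau}}{\mu(\mu-\sigma e^{\mu\tau})}\right)\right\}$$ is an absorbing set for $\Phi$: for every bounded set $\mathcal{D}\subset\mathcal{C}$ there exists $T_{\mathcal{D}}>0$ such that $\Phi(t)\mathcal{D}\subset\mathcal{B}$ for all $t\ge T_{\mathcal{D}}$.
   Context: An absorbing set for the dynamical system $\{\Phi(t)\}_{t\ge0}$ on $\mathcal{C}$ is a set $\mathcal{B}\subset\mathcal{C}$ such that for every bounded $\mathcal{D}\subset\mathcal{C}$ there is $T_{\mathcal{D}}>0$ with $\Phi(t)\mathcal{D}\subset\mathcal{B}$ for all $t\ge T_{\mathcal{D}}$. *)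

theory Defs
  imports "HOL-Analysis.Analysis"
begin

text \<open>Elements of X = L^2(R^N) are represented by functions of type real^'n => real
  (N = CARD('n)); two representatives denote the same element of X iff they agree a.e.\<close>

definition L2 :: "(real^'n \<Rightarrow> real) \<Rightarrow> bool" where
  "L2 f \<longleftrightarrow> f \<in> borel_measurable lborel \<and> integrable lborel (\<lambda>x. (f x)\<^sup>2)"

definition L2norm :: "(real^'n \<Rightarrow> real) \<Rightarrow> real" where
  "L2norm f = sqrt (\<integral>x. (f x)\<^sup>2 \<partial>lborel)"

definition heat_sg :: "real \<Rightarrow> real \<Rightarrow> (real^'n \<Rightarrow> real) \<Rightarrow> (real^'n \<Rightarrow> real)" where
  "heat_sg \<mu> t \<phi> x =
     (if t = 0 then \<phi> x
      else exp (- \<mu> * t) / (4 * pi * t) powr (real CARD('n) / 2) *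
           (\<integral>y. \<phi> y * exp (- (norm (x - y))\<^sup>2 / (4 * t)) \<partial>lborel))"

definition gauss_kernel :: "real \<Rightarrow> real^'n \<Rightarrow> real" where
  "gauss_kernel \<iota> x = (4 * pi * \<iota>) powr (- real CARD('n) / 2) * exp (- (norm x)\<^sup>2 / (4 * \<iota>))"

definition Hop :: "real \<Rightarrow> (real^'n \<Rightarrow> real) \<Rightarrow> (real^'n \<Rightarrow> real)" where
  "Hop \<iota> \<phi> x = (\<integral>y. gauss_kernel \<iota> (x - y) * \<phi> y \<partial>lborel)"

definition L2_continuous_on :: "real set \<Rightarrow> (real \<Rightarrow> real^'n \<Rightarrow> real) \<Rightarrow> bool" where
  "L2_continuous_on S w \<longleftrightarrow>
     (\<forall>t\<in>S. \<forall>\<epsilon>>0. \<exists>\<delta>>0. \<forall>s\<in>S. \<bar>s - t\<bar> < \<delta> \<longrightarrow> L2norm (w s - w t) < \<epsilon>)"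

text \<open>The phase space C = C([-tau,0], X) (values outside [-tau,0] are irrelevant).\<close>
definition Cspace :: "real \<Rightarrow> (real \<Rightarrow> real^'n \<Rightarrow> real) set" where
  "Cspace \<tau> = {\<phi>. (\<forall>\<theta>\<in>{-\<tau>..0}. L2 (\<phi> \<theta>)) \<and> L2_continuous_on {-\<tau>..0} \<phi>}"

definition Cnorm :: "real \<Rightarrow> (real \<Rightarrow> real^'n \<Rightarrow> real) \<Rightarrow> real" where
  "Cnorm \<tau> \<phi> = (SUP \<theta>\<in>{-\<tau>..0}. L2norm (\<phi> \<theta>))"

definition mild_solution ::
  "real \<Rightarrow> real \<Rightarrow> real \<Rightarrow> real \<Rightarrow> ((real^'n \<Rightarrow> real) \<Rightarrow> (real^'n \<Rightarrow> real)) \<Rightarrow> (real^'n \<Rightarrow> real)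
   \<Rightarrow> (real \<Rightarrow> real^'n \<Rightarrow> real) \<Rightarrow> (real \<Rightarrow> real^'n \<Rightarrow> real) \<Rightarrow> bool" where
  "mild_solution \<tau> \<mu> \<sigma> \<iota> f g \<phi> u \<longleftrightarrow>
     (\<forall>t\<in>{-\<tau>..}. L2 (u t)) \<and>
     L2_continuous_on {-\<tau>..} u \<and>
     (\<lambda>(s, x). u s x) \<in> borel_measurable (lborel \<Otimes>\<^sub>M lborel) \<and>
     (\<lambda>(s, x). f (u s) x) \<in> borel_measurable (lborel \<Otimes>\<^sub>M lborel) \<and>
     (\<forall>\<theta>\<in>{-\<tau>..0}. AE x in lborel. u \<theta> x = \<phi> \<theta> x) \<and>
     (\<forall>t>0. AE x in lborel.
        u t x = heat_sg \<mu> t (\<phi> 0) x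
          + \<sigma> * (LINT s:{0..t}|lborel. heat_sg \<mu> (t - s) (u (s - \<tau>)) x)
          + (LINT s:{0..t}|lborel. heat_sg \<mu> (t - s) (\<lambda>y. Hop \<iota> (f (u (s - \<tau>))) y + g y) x))"

end

theory Submission
  imports Defs "HOL-Probability.Distributions"
begin

text \<open>
  Both Gaussian kernels have unit mass, so by Young's inequality \<open>\<parallel>S(t)\<psi>\<parallel> \<le> exp(-\<mu>t) \<parallel>\<psi>\<parallel>\<close> and
  \<open>\<parallel>H\<psi>\<parallel> \<le> \<parallel>\<psi>\<parallel>\<close>. Minkowski's integral inequality turns the mild formulation into
  \<open>\<parallel>u(t)\<parallel> \<le> exp(-\<mu>t) \<parallel>\<phi>(0)\<parallel> + \<sigma> \<integral>\<^sub>0\<^sup>t exp(-\<mu>(t - s)) \<parallel>u(s - \<tau>)\<parallel> ds + M/\<mu>\<close>.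
  Write \<open>\<kappa> = \<sigma> exp(\<mu>\<tau>) < \<mu>\<close>. If \<open>\<parallel>u(r)\<parallel> \<le> A exp(-(\<mu> - \<kappa>) r) + M/(\<mu> - \<kappa>)\<close> holds for the
  delayed arguments \<open>r = s - \<tau>\<close>, the right-hand side reproduces the same bound at \<open>t\<close>, provided
  \<open>A \<ge> R/(1 - exp(-\<kappa>\<tau>))\<close> where \<open>R\<close> bounds the initial history. Induction over the intervals
  \<open>[-\<tau>, k\<tau>]\<close> gives the bound for all times; once the exponential term is below \<open>M/(\<mu> - \<kappa>)\<close>,
  every segment \<open>u\<^sub>t\<close> has norm at most \<open>2M/(\<mu> - \<kappa>)\<close>, the radius of the absorbing ball.
\<close>

section \<open>Inequalities for nonnegative integrals\<close>

lemma ennreal_power2_le_of_abs_le: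
  assumes "ennreal \<bar>y\<bar> \<le> X"
  shows "ennreal (y\<^sup>2) \<le> X\<^sup>2"
proof -
  have "(ennreal \<bar>y\<bar>)\<^sup>2 \<le> X\<^sup>2"
    using assms by (rule power_mono) simp
  then show ?thesis
    by (simp add: ennreal_power)
qed

lemma ennreal_le_of_power2_le:
  assumes "X\<^sup>2 \<le> ennreal (y\<^sup>2)" "y \<ge> 0"
  shows "X \<le> ennreal y"
proof (cases X rule: ennreal_cases)
  case (real x)
  then have "x\<^sup>2 \<le> y\<^sup>2"
    using assms by (simp add: ennreal_power)
  then show ?thesis
    using real assms(2) by (simp add: abs_le_square_iff[symmetric])
next
  case top
  moreover have "(ennreal y)\<^sup>2 = ennreal (y\<^sup>2)"
    using assms(2) by (simp add: ennreal_power)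
  ultimately show ?thesis
    using assms by (simp add: top_unique)
qed

lemma abs_integral_le_nn_integral_abs:
  fixes f :: "'a \<Rightarrow> real"
  shows "ennreal \<bar>integral\<^sup>L M f\<bar> \<le> (\<integral>\<^sup>+x. ennreal \<bar>f x\<bar> \<partial>M)"
  using integral_norm_bound_ennreal[of M f] by (cases "integrable M f") (auto simp: not_integrable_integral_eq)

lemma abs_set_integral_le_nn_integral:
  fixes h :: "real \<Rightarrow> real"
  shows "ennreal \<bar>LINT s:S|lborel. h s\<bar> \<le> (\<integral>\<^sup>+s. indicator S s * ennreal \<bar>h s\<bar> \<partial>lborel)"
proof -
  have "ennreal \<bar>LINT s:S|lborel. h s\<bar> \<le> (\<integral>\<^sup>+s. ennreal \<bar>indicator S s *\<^sub>R h s\<bar> \<partial>lborel)"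
    unfolding set_lebesgue_integral_def by (rule abs_integral_le_nn_integral_abs)
  also have "\<dots> = (\<integral>\<^sup>+s. indicator S s * ennreal \<bar>h s\<bar> \<partial>lborel)"
    by (rule nn_integral_cong) (simp split: split_indicator)
  finally show ?thesis .
qed

lemma abs_Duhamel_sum_le:
  fixes h k :: "real \<Rightarrow> real"
  assumes "\<sigma> \<ge> 0"
  shows "ennreal \<bar>a + \<sigma> * (LINT s:S|lborel. h s) + (LINT s:S|lborel. k s)\<bar>
    \<le> ennreal \<bar>a\<bar> + ennreal \<sigma> * (\<integral>\<^sup>+s. indicator S s * ennreal \<bar>h s\<bar> \<partial>lborel)
        + (\<integral>\<^sup>+s. indicator S s * ennreal \<bar>k s\<bar> \<partial>lborel)"
proof -
  have "ennreal \<bar>a + \<sigma> * I + K\<bar> \<le> ennreal \<bar>a\<bar> + ennreal \<sigma> * ennreal \<bar>I\<bar> + ennreal \<bar>K\<bar>"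
    for I K :: real
  proof -
    have "\<bar>a + \<sigma> * I + K\<bar> \<le> \<bar>a\<bar> + \<sigma> * \<bar>I\<bar> + \<bar>K\<bar>"
      using assms abs_triangle_ineq[of "a + \<sigma> * I" K] abs_triangle_ineq[of a "\<sigma> * I"]
      by (simp add: abs_mult)
    then have "ennreal \<bar>a + \<sigma> * I + K\<bar> \<le> ennreal (\<bar>a\<bar> + \<sigma> * \<bar>I\<bar> + \<bar>K\<bar>)"
      by (rule ennreal_leI)
    also have "\<dots> = ennreal \<bar>a\<bar> + ennreal \<sigma> * ennreal \<bar>I\<bar> + ennreal \<bar>K\<bar>"
      using assms by (simp add: ennreal_mult)
    finally show ?thesis .
  qed
  then have "ennreal \<bar>a + \<sigma> * (LINT s:S|lborel. h s) + (LINT s:S|lborel. k s)\<bar>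
      \<le> ennreal \<bar>a\<bar> + ennreal \<sigma> * ennreal \<bar>LINT s:S|lborel. h s\<bar> + ennreal \<bar>LINT s:S|lborel. k s\<bar>" .
  also have "\<dots> \<le> ennreal \<bar>a\<bar> + ennreal \<sigma> * (\<integral>\<^sup>+s. indicator S s * ennreal \<bar>h s\<bar> \<partial>lborel)
        + (\<integral>\<^sup>+s. indicator S s * ennreal \<bar>k s\<bar> \<partial>lborel)"
    by (intro add_mono mult_left_mono abs_set_integral_le_nn_integral order_refl) simp
  finally show ?thesis .
qed

lemma nn_integral_power2_add_le:
  fixes a b :: "'a \<Rightarrow> ennreal"
  assumes [measurable]: "a \<in> borel_measurable M" "b \<in> borel_measurable M"
    and a: "(\<integral>\<^sup>+x. (a x)\<^sup>2 \<partial>M) \<le> ennreal (A\<^sup>2)" "A \<ge> 0"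
    and b: "(\<integral>\<^sup>+x. (b x)\<^sup>2 \<partial>M) \<le> ennreal (B\<^sup>2)" "B \<ge> 0"
  shows "(\<integral>\<^sup>+x. (a x + b x)\<^sup>2 \<partial>M) \<le> ennreal ((A + B)\<^sup>2)"
proof -
  have "(\<integral>\<^sup>+x. a x * b x \<partial>M)\<^sup>2 \<le> (\<integral>\<^sup>+x. (a x)\<^sup>2 \<partial>M) * (\<integral>\<^sup>+x. (b x)\<^sup>2 \<partial>M)"
    using assms(1,2) by (rule Cauchy_Schwarz_nn_integral)
  also have "\<dots> \<le> ennreal (A\<^sup>2) * ennreal (B\<^sup>2)"
    by (rule mult_mono) (use a b in auto)
  also have "\<dots> = ennreal ((A * B)\<^sup>2)"
    using a b by (simp add: ennreal_mult[symmetric] power_mult_distrib)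
  finally have cross: "(\<integral>\<^sup>+x. a x * b x \<partial>M) \<le> ennreal (A * B)"
    by (rule ennreal_le_of_power2_le) (use a b in auto)
  have "(\<integral>\<^sup>+x. (a x + b x)\<^sup>2 \<partial>M) = (\<integral>\<^sup>+x. (a x)\<^sup>2 + 2 * (a x * b x) + (b x)\<^sup>2 \<partial>M)"
    by (simp add: power2_sum mult.assoc add_ac)
  also have "\<dots> = (\<integral>\<^sup>+x. (a x)\<^sup>2 \<partial>M) + 2 * (\<integral>\<^sup>+x. a x * b x \<partial>M) + (\<integral>\<^sup>+x. (b x)\<^sup>2 \<partial>M)"
    by (simp add: nn_integral_add nn_integral_cmult)
  also have "\<dots> \<le> ennreal (A\<^sup>2) + ennreal (2 * (A * B)) + ennreal (B\<^sup>2)"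
    using mult_left_mono[OF cross, of 2] a b by (intro add_mono) (simp_all add: ennreal_mult)
  also have "\<dots> = ennreal ((A + B)\<^sup>2)"
  proof -
    have "0 \<le> 2 * (A * B)"
      using a b by simp
    then show ?thesis
      by (simp add: power2_sum ennreal_plus add_ac)
  qed
  finally show ?thesis .
qed

lemma nn_integral_power2_add_le_real:
  fixes a b :: "'a \<Rightarrow> real"
  assumes [measurable]: "a \<in> borel_measurable M" "b \<in> borel_measurable M"
    and a: "(\<integral>\<^sup>+x. ennreal ((a x)\<^sup>2) \<partial>M) \<le> ennreal (A\<^sup>2)" "A \<ge> 0"
    and b: "(\<integral>\<^sup>+x. ennreal ((b x)\<^sup>2) \<partial>M) \<le> ennreal (B\<^sup>2)" "B \<ge> 0"
  shows "(\<integral>\<^sup>+x. ennreal ((a x + b x)\<^sup>2) \<partial>M) \<le> ennreal ((A + B)\<^sup>2)"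
proof -
  have square_abs: "ennreal (r\<^sup>2) = (ennreal \<bar>r\<bar>)\<^sup>2" for r :: real
    by (simp add: ennreal_power)
  have "(\<integral>\<^sup>+x. ennreal ((a x + b x)\<^sup>2) \<partial>M) \<le> (\<integral>\<^sup>+x. (ennreal \<bar>a x\<bar> + ennreal \<bar>b x\<bar>)\<^sup>2 \<partial>M)"
    unfolding square_abs
    by (intro nn_integral_mono power_mono) (simp_all add: ennreal_plus[symmetric] del: ennreal_plus)
  also have "\<dots> \<le> ennreal ((A + B)\<^sup>2)"
  proof (rule nn_integral_power2_add_le)
    show "(\<integral>\<^sup>+x. (ennreal \<bar>a x\<bar>)\<^sup>2 \<partial>M) \<le> ennreal (A\<^sup>2)"
      and "(\<integral>\<^sup>+x. (ennreal \<bar>b x\<bar>)\<^sup>2 \<partial>M) \<le> ennreal (B\<^sup>2)"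
      using a b unfolding square_abs by simp_all
  qed (use a b in measurable)
  finally show ?thesis .
qed

lemma Cauchy_Schwarz_nn_integral_weighted:
  fixes F :: "'a \<Rightarrow> ennreal" and W :: "'a \<Rightarrow> real"
  assumes [measurable]: "F \<in> borel_measurable M" "W \<in> borel_measurable M" "S \<in> sets M"
    and W_pos: "\<And>s. s \<in> S \<Longrightarrow> W s > 0"
  shows "(\<integral>\<^sup>+s. indicator S s * F s \<partial>M)\<^sup>2
    \<le> (\<integral>\<^sup>+s. indicator S s * ennreal (W s) \<partial>M) * (\<integral>\<^sup>+s. indicator S s * ennreal (1 / W s) * (F s)\<^sup>2 \<partial>M)"
proof -
  define p where "p s = (indicator S s :: ennreal) * ennreal (sqrt (W s))" for s
  define q where "q s = (indicator S s :: ennreal) * ennreal (1 / sqrt (W s)) * F s" for s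
  have [measurable]: "p \<in> borel_measurable M" "q \<in> borel_measurable M"
    unfolding p_def q_def by measurable
  have "indicator S s * F s = p s * q s" and "(p s)\<^sup>2 = indicator S s * ennreal (W s)"
    and "(q s)\<^sup>2 = indicator S s * ennreal (1 / W s) * (F s)\<^sup>2" for s
    using W_pos[of s]
    by (cases "s \<in> S"; simp add: p_def q_def ennreal_power power_mult_distrib power_divide
        mult.assoc[symmetric] ennreal_mult[symmetric])+
  moreover have "(\<integral>\<^sup>+s. p s * q s \<partial>M)\<^sup>2 \<le> (\<integral>\<^sup>+s. (p s)\<^sup>2 \<partial>M) * (\<integral>\<^sup>+s. (q s)\<^sup>2 \<partial>M)"
    by (rule Cauchy_Schwarz_nn_integral) simp_all
  ultimately show ?thesis
    by simp
qed

text \<open>The majorant \<open>W\<close> has to be positive because it serves as the Cauchy-Schwarz weight.\<close>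
lemma nn_integral_Minkowski_integral:
  fixes F :: "real \<Rightarrow> 'a::euclidean_space \<Rightarrow> ennreal" and W :: "real \<Rightarrow> real"
  assumes [measurable]: "case_prod F \<in> borel_measurable (lborel \<Otimes>\<^sub>M lborel)"
    and [measurable]: "W \<in> borel_measurable borel" "S \<in> sets borel"
    and W_pos: "\<And>s. s \<in> S \<Longrightarrow> W s > 0"
    and F_le: "\<And>s. s \<in> S \<Longrightarrow> (\<integral>\<^sup>+x. (F s x)\<^sup>2 \<partial>lborel) \<le> ennreal ((W s)\<^sup>2)"
  shows "(\<integral>\<^sup>+x. (\<integral>\<^sup>+s. indicator S s * F s x \<partial>lborel)\<^sup>2 \<partial>lborel)
          \<le> (\<integral>\<^sup>+s. indicator S s * ennreal (W s) \<partial>lborel)\<^sup>2"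
proof -
  define I where "I = (\<integral>\<^sup>+s. indicator S s * ennreal (W s) \<partial>lborel)"
  define G where "G s x = indicator S s * ennreal (1 / W s) * (F s x)\<^sup>2" for s x
  have [measurable]: "case_prod G \<in> borel_measurable (lborel \<Otimes>\<^sub>M lborel)"
    unfolding G_def by measurable
  have G_le: "(\<integral>\<^sup>+x. G s x \<partial>lborel) \<le> indicator S s * ennreal (W s)" for s
  proof (cases "s \<in> S")
    case True
    have [measurable]: "F s \<in> borel_measurable lborel"
      using measurable_Pair2[OF assms(1), of s] by simp
    have "(\<integral>\<^sup>+x. G s x \<partial>lborel) = ennreal (1 / W s) * (\<integral>\<^sup>+x. (F s x)\<^sup>2 \<partial>lborel)"
      using True unfolding G_def by (subst nn_integral_cmult[symmetric]) simp_all
    also have "\<dots> \<le> ennreal (1 / W s) * ennreal ((W s)\<^sup>2)"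
      by (intro mult_left_mono F_le True) auto
    also have "\<dots> = ennreal (W s)"
      using W_pos[OF True] by (simp add: ennreal_mult[symmetric] power2_eq_square)
    finally show ?thesis
      using True by simp
  qed (simp add: G_def)
  have "(\<integral>\<^sup>+x. (\<integral>\<^sup>+s. indicator S s * F s x \<partial>lborel)\<^sup>2 \<partial>lborel)
     \<le> (\<integral>\<^sup>+x. I * (\<integral>\<^sup>+s. G s x \<partial>lborel) \<partial>lborel)"
    unfolding I_def G_def using W_pos
    by (intro nn_integral_mono Cauchy_Schwarz_nn_integral_weighted) (simp_all add: mult.assoc)
  also have "\<dots> = I * (\<integral>\<^sup>+s. (\<integral>\<^sup>+x. G s x \<partial>lborel) \<partial>lborel)"
    by (subst lborel_pair.Fubini') (measurable, rule nn_integral_cmult, measurable)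
  also have "\<dots> \<le> I * I"
    unfolding I_def by (intro mult_left_mono nn_integral_mono G_le) simp
  finally show ?thesis
    by (simp add: I_def power2_eq_square)
qed

lemma nn_integral_reflect_shift:
  fixes h :: "'a::euclidean_space \<Rightarrow> ennreal"
  assumes [measurable]: "h \<in> borel_measurable borel"
  shows "(\<integral>\<^sup>+y. h (x - y) \<partial>lborel) = (\<integral>\<^sup>+y. h y \<partial>lborel)"
proof -
  have "(\<integral>\<^sup>+y. h (x - y) \<partial>lborel)
      = (\<integral>\<^sup>+y. h (x - y) \<partial>density (distr lborel borel (\<lambda>z. x + (-1) *\<^sub>R z)) (\<lambda>_. \<bar>-1::real\<bar> ^ DIM('a)))"
    by (subst lborel_affine[of "-1" x, symmetric]) auto
  also have "\<dots> = (\<integral>\<^sup>+y. h y \<partial>lborel)"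
    by (simp add: nn_integral_density nn_integral_distr density_1)
  finally show ?thesis .
qed

lemma nn_integral_shift:
  fixes h :: "'a::euclidean_space \<Rightarrow> ennreal"
  assumes [measurable]: "h \<in> borel_measurable borel"
  shows "(\<integral>\<^sup>+x. h (x - y) \<partial>lborel) = (\<integral>\<^sup>+x. h x \<partial>lborel)"
proof -
  have "(\<integral>\<^sup>+x. h (x - y) \<partial>lborel) = (\<integral>\<^sup>+x. h (x - y) \<partial>distr lborel borel ((+) y))"
    by (simp add: lborel_distr_plus)
  also have "\<dots> = (\<integral>\<^sup>+x. h x \<partial>lborel)"
    by (simp add: nn_integral_distr)
  finally show ?thesis .
qed

text \<open>Young's inequality \<open>\<parallel>k * \<psi>\<parallel>\<^sub>2 \<le> K \<parallel>\<psi>\<parallel>\<^sub>2\<close> for a kernel of mass \<open>K\<close>: Cauchy-Schwarz against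
  the measure \<open>k(x - y) dy\<close>, then Tonelli.\<close>
lemma nn_integral_convolution_square_le:
  fixes k \<psi> :: "'a::euclidean_space \<Rightarrow> real"
  assumes [measurable]: "k \<in> borel_measurable borel" "\<psi> \<in> borel_measurable borel"
    and k_nonneg: "\<And>z. k z \<ge> 0"
    and mass: "(\<integral>\<^sup>+z. ennreal (k z) \<partial>lborel) = ennreal K"
  shows "(\<integral>\<^sup>+x. (\<integral>\<^sup>+y. ennreal (k (x - y) * \<bar>\<psi> y\<bar>) \<partial>lborel)\<^sup>2 \<partial>lborel)
          \<le> ennreal K * ennreal K * (\<integral>\<^sup>+y. ennreal ((\<psi> y)\<^sup>2) \<partial>lborel)"
proof -
  have pointwise: "(\<integral>\<^sup>+y. ennreal (k (x - y) * \<bar>\<psi> y\<bar>) \<partial>lborel)\<^sup>2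
      \<le> ennreal K * (\<integral>\<^sup>+y. ennreal (k (x - y) * (\<psi> y)\<^sup>2) \<partial>lborel)" for x
  proof -
    have split: "ennreal (k (x - y) * \<bar>\<psi> y\<bar>)
        = ennreal (sqrt (k (x - y))) * ennreal (sqrt (k (x - y)) * \<bar>\<psi> y\<bar>)" for y
      using k_nonneg[of "x - y"]
      by (simp add: ennreal_mult[symmetric] mult.assoc[symmetric] real_sqrt_mult[symmetric])
    have "(\<integral>\<^sup>+y. ennreal (k (x - y) * \<bar>\<psi> y\<bar>) \<partial>lborel)\<^sup>2
       \<le> (\<integral>\<^sup>+y. (ennreal (sqrt (k (x - y))))\<^sup>2 \<partial>lborel)
         * (\<integral>\<^sup>+y. (ennreal (sqrt (k (x - y)) * \<bar>\<psi> y\<bar>))\<^sup>2 \<partial>lborel)"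
      unfolding split by (rule Cauchy_Schwarz_nn_integral) measurable
    also have "(\<integral>\<^sup>+y. (ennreal (sqrt (k (x - y))))\<^sup>2 \<partial>lborel) = ennreal K"
      using nn_integral_reflect_shift[of "\<lambda>z. ennreal (k z)" x] mass k_nonneg
      by (simp add: ennreal_power)
    also have "(\<lambda>y. (ennreal (sqrt (k (x - y)) * \<bar>\<psi> y\<bar>))\<^sup>2) = (\<lambda>y. ennreal (k (x - y) * (\<psi> y)\<^sup>2))"
      using k_nonneg by (simp add: ennreal_power power_mult_distrib)
    finally show ?thesis .
  qed
  have "(\<integral>\<^sup>+x. (\<integral>\<^sup>+y. ennreal (k (x - y) * \<bar>\<psi> y\<bar>) \<partial>lborel)\<^sup>2 \<partial>lborel)
     \<le> ennreal K * (\<integral>\<^sup>+x. (\<integral>\<^sup>+y. ennreal (k (x - y) * (\<psi> y)\<^sup>2) \<partial>lborel) \<partial>lborel)"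
    by (subst nn_integral_cmult[symmetric]) (measurable, intro nn_integral_mono pointwise)
  also have "(\<integral>\<^sup>+x. (\<integral>\<^sup>+y. ennreal (k (x - y) * (\<psi> y)\<^sup>2) \<partial>lborel) \<partial>lborel)
      = (\<integral>\<^sup>+y. (\<integral>\<^sup>+x. ennreal (k (x - y)) * ennreal ((\<psi> y)\<^sup>2) \<partial>lborel) \<partial>lborel)"
    using k_nonneg by (subst lborel_pair.Fubini') (measurable, simp add: ennreal_mult)
  also have "\<dots> = (\<integral>\<^sup>+y. ennreal K * ennreal ((\<psi> y)\<^sup>2) \<partial>lborel)"
    by (simp add: nn_integral_multc nn_integral_shift[of "\<lambda>z. ennreal (k z)"] mass)
  also have "\<dots> = ennreal K * (\<integral>\<^sup>+y. ennreal ((\<psi> y)\<^sup>2) \<partial>lborel)"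
    by (rule nn_integral_cmult) measurable
  finally show ?thesis by (simp add: mult.assoc)
qed

lemma measurable_time_shift:
  fixes w :: "real \<Rightarrow> 'a::euclidean_space \<Rightarrow> real"
  assumes "(\<lambda>(s, x). w s x) \<in> borel_measurable (lborel \<Otimes>\<^sub>M lborel)"
  shows "(\<lambda>p. w (fst p - \<tau>) (snd p)) \<in> borel_measurable (lborel \<Otimes>\<^sub>M lborel)"
proof -
  have "(\<lambda>q. (fst q - \<tau>, snd q)) \<in> measurable (lborel \<Otimes>\<^sub>M lborel) (lborel \<Otimes>\<^sub>M (lborel :: 'a measure))"
    by (intro measurable_Pair measurable_snd) (simp add: measurable_fst'')
  from measurable_compose[OF this assms] show ?thesis
    by (simp add: split_beta')
qed

lemma nn_integral_exp_Duhamel_le: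
  fixes \<mu> \<nu> A L t \<tau> :: real
  assumes "0 < \<mu>" "\<nu> < \<mu>" "0 \<le> A" "0 \<le> L" "0 \<le> t"
  shows "(\<integral>\<^sup>+s. indicator {0..t} s * ennreal (exp (- \<mu> * (t - s)) * (A * exp (- \<nu> * (s - \<tau>)) + L)) \<partial>lborel)
      \<le> ennreal (A * exp (\<nu> * \<tau>) / (\<mu> - \<nu>) * exp (- \<nu> * t) + L / \<mu>)"
proof -
  define c where "c = \<mu> - \<nu>"
  have "c > 0"
    using assms by (simp add: c_def)
  define F where "F s = A * exp (\<nu> * \<tau>) / c * exp (c * s - \<mu> * t) + L / \<mu> * exp (\<mu> * s - \<mu> * t)"
    for s
  have integrand: "exp (- \<mu> * (t - s)) * (A * exp (- \<nu> * (s - \<tau>)) + L)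
      = A * exp (\<nu> * \<tau>) * exp (c * s - \<mu> * t) + L * exp (\<mu> * s - \<mu> * t)" for s
    by (simp add: c_def algebra_simps flip: exp_add)
  have "((\<lambda>s. exp (- \<mu> * (t - s)) * (A * exp (- \<nu> * (s - \<tau>)) + L)) has_integral (F t - F 0)) {0..t}"
    unfolding integrand
  proof (rule fundamental_theorem_of_calculus[OF assms(5)])
    fix s
    have "(F has_real_derivative
        A * exp (\<nu> * \<tau>) / c * (exp (c * s - \<mu> * t) * c) + L / \<mu> * (exp (\<mu> * s - \<mu> * t) * \<mu>)) (at s)"
      unfolding F_def by (rule derivative_eq_intros refl | simp)+
    moreover have "A * exp (\<nu> * \<tau>) / c * (exp (c * s - \<mu> * t) * c) + L / \<mu> * (exp (\<mu> * s - \<mu> * t) * \<mu>)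
        = A * exp (\<nu> * \<tau>) * exp (c * s - \<mu> * t) + L * exp (\<mu> * s - \<mu> * t)"
      using \<open>c > 0\<close> assms(1) by simp
    ultimately show "(F has_vector_derivative
        A * exp (\<nu> * \<tau>) * exp (c * s - \<mu> * t) + L * exp (\<mu> * s - \<mu> * t)) (at s within {0..t})"
      by (simp add: has_real_derivative_iff_has_vector_derivative[symmetric] has_field_derivative_at_within)
  qed
  then have integral: "(\<integral>\<^sup>+s. indicator {0..t} s * ennreal (exp (- \<mu> * (t - s)) * (A * exp (- \<nu> * (s - \<tau>)) + L)) \<partial>lborel)
      = ennreal (F t - F 0)"
    using assms by (subst nn_integral_has_integral_lebesgue[symmetric])
      (auto intro!: nn_integral_cong simp: indicator_def)
  have "F t - F 0 \<le> F t"
  proof -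
    have "0 \<le> F 0"
      unfolding F_def using assms \<open>c > 0\<close> by (intro add_nonneg_nonneg mult_nonneg_nonneg) auto
    then show ?thesis
      by simp
  qed
  also have "F t = A * exp (\<nu> * \<tau>) / (\<mu> - \<nu>) * exp (- \<nu> * t) + L / \<mu>"
    by (simp add: F_def c_def algebra_simps)
  finally show ?thesis
    unfolding integral by (rule ennreal_leI)
qed

lemma exp_decay_eventually_le:
  fixes A \<nu> \<tau> c :: real
  assumes "\<nu> > 0" "c > 0"
  obtains T where "T > 0" "\<And>t. t \<ge> T \<Longrightarrow> A * exp (- \<nu> * (t - \<tau>)) \<le> c"
proof -
  have "filterlim (\<lambda>t. - \<tau> + t) at_top at_top"
    by (rule filterlim_tendsto_add_at_top[OF tendsto_const filterlim_ident])
  then have "filterlim (\<lambda>t. \<nu> * (t - \<tau>)) at_top at_top"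
    using assms(1) by (intro filterlim_tendsto_pos_mult_at_top[OF tendsto_const]) simp_all
  then have "((\<lambda>t. exp (- (\<nu> * (t - \<tau>)))) \<longlongrightarrow> 0) at_top"
    by (rule filterlim_compose[OF exp_at_bot filterlim_uminus_at_top[THEN iffD1]])
  then have "((\<lambda>t. A * exp (- \<nu> * (t - \<tau>))) \<longlongrightarrow> 0) at_top"
    by (simp add: tendsto_mult_right_zero)
  then have "eventually (\<lambda>t. A * exp (- \<nu> * (t - \<tau>)) < c) at_top"
    using assms(2) by (rule order_tendstoD(2))
  then obtain T where "\<And>t. t \<ge> T \<Longrightarrow> A * exp (- \<nu> * (t - \<tau>)) < c"
    by (auto simp: eventually_at_top_linorder)
  then show ?thesis
    by (intro that[of "max T 1"]) (auto simp: less_imp_le)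
qed

lemma method_of_steps [consumes 2, case_names initial step]:
  fixes P :: "real \<Rightarrow> bool"
  assumes "r \<ge> -\<tau>" "\<tau> > 0"
    and initial: "\<And>r. r \<in> {-\<tau>..0} \<Longrightarrow> P r"
    and step: "\<And>t. t > 0 \<Longrightarrow> (\<And>s. s \<in> {0..t} \<Longrightarrow> P (s - \<tau>)) \<Longrightarrow> P t"
  shows "P r"
proof -
  have "\<forall>r\<in>{-\<tau>..real k * \<tau>}. P r" for k :: nat
  proof (induction k)
    case 0
    then show ?case
      using initial by simp
  next
    case (Suc k)
    show ?case
    proof
      fix t
      assume t: "t \<in> {-\<tau>..real (Suc k) * \<tau>}"
      show "P t"
      proof (cases "t \<le> real k * \<tau>")
        case True
        with Suc.IH t show ?thesis
          by simp
      next
        case False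
        with \<open>\<tau> > 0\<close> have "t > 0"
          by (smt (verit) of_nat_0_le_iff mult_nonneg_nonneg)
        moreover have "P (s - \<tau>)" if "s \<in> {0..t}" for s
          using Suc.IH that t by (simp add: algebra_simps)
        ultimately show ?thesis
          by (rule step)
      qed
    qed
  qed
  moreover obtain k :: nat where "r / \<tau> \<le> real k"
    using real_arch_simple by blast
  then have "r \<le> real k * \<tau>"
    using \<open>\<tau> > 0\<close> by (simp add: divide_le_eq)
  ultimately show ?thesis
    using \<open>r \<ge> -\<tau>\<close> by auto
qed

section \<open>Gaussian kernels and the heat semigroup\<close>

lemma nn_integral_gaussian_real:
  assumes "c > 0"
  shows "(\<integral>\<^sup>+x. ennreal (exp (- x\<^sup>2 / (4 * c))) \<partial>lborel) = ennreal (sqrt (4 * pi * c))"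
proof -
  define s where "s = sqrt (2 * c)"
  have "s\<^sup>2 = 2 * c" using assms by (simp add: s_def)
  then have density: "exp (- x\<^sup>2 / (4 * c)) = sqrt (4 * pi * c) * normal_density 0 s x" for x
    unfolding normal_density_def using assms by (simp add: real_sqrt_mult)
  have "(\<integral>\<^sup>+x. ennreal (normal_density 0 s x) \<partial>lborel) = 1"
    using assms unfolding s_def by (subst nn_integral_eq_integral) auto
  then show ?thesis
    unfolding density using assms by (simp add: ennreal_mult nn_integral_cmult)
qed

lemma nn_integral_gaussian:
  assumes "c > 0"
  shows "(\<integral>\<^sup>+x. ennreal (exp (- (norm x)\<^sup>2 / (4 * c))) \<partial>(lborel :: 'a::euclidean_space measure))
     = ennreal ((4 * pi * c) powr (DIM('a) / 2))"
proof -
  have product: "ennreal (exp (- (norm x)\<^sup>2 / (4 * c)))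
      = (\<Prod>b\<in>Basis. ennreal (exp (- (x \<bullet> b)\<^sup>2 / (4 * c))))" for x :: 'a
  proof -
    have "(norm x)\<^sup>2 = (\<Sum>b\<in>Basis. (x \<bullet> b)\<^sup>2)"
      unfolding power2_norm_eq_inner by (subst euclidean_inner) (simp add: power2_eq_square)
    then show ?thesis
      by (simp add: prod_ennreal exp_sum[symmetric] sum_negf sum_divide_distrib)
  qed
  have "(\<integral>\<^sup>+x. ennreal (exp (- (norm x)\<^sup>2 / (4 * c))) \<partial>(lborel :: 'a measure))
     = (\<Prod>b\<in>(Basis :: 'a set). \<integral>\<^sup>+x. ennreal (exp (- x\<^sup>2 / (4 * c))) \<partial>lborel)"
    unfolding product by (rule nn_integral_lborel_prod) auto
  also have "\<dots> = ennreal (sqrt (4 * pi * c) ^ DIM('a))"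
    using nn_integral_gaussian_real[OF assms] ennreal_power[of "sqrt (4 * pi * c)" "DIM('a)"] assms
    by simp
  also have "sqrt (4 * pi * c) ^ DIM('a) = (4 * pi * c) powr (DIM('a) / 2)"
    using assms by (simp add: sqrt_def powr_realpow[symmetric] root_powr_inverse powr_powr)
  finally show ?thesis .
qed

lemma nn_integral_gauss_kernel:
  assumes "\<iota> > 0"
  shows "(\<integral>\<^sup>+x. ennreal (gauss_kernel \<iota> (x :: real^'n)) \<partial>lborel) = 1"
proof -
  have "(\<integral>\<^sup>+x. ennreal (gauss_kernel \<iota> (x :: real^'n)) \<partial>lborel)
      = ennreal ((4 * pi * \<iota>) powr (- CARD('n) / 2))
        * (\<integral>\<^sup>+x. ennreal (exp (- (norm (x :: real^'n))\<^sup>2 / (4 * \<iota>))) \<partial>lborel)"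
    by (subst nn_integral_cmult[symmetric])
      (auto simp: gauss_kernel_def ennreal_mult[symmetric] intro!: nn_integral_cong)
  also have "\<dots> = 1"
    using assms nn_integral_gaussian[OF assms, where 'a="real^'n"]
    by (simp add: ennreal_mult[symmetric] powr_add[symmetric])
  finally show ?thesis .
qed

lemma heat_sg_eq_Hop:
  fixes \<psi> :: "real^'n \<Rightarrow> real"
  assumes "t > 0"
  shows "heat_sg \<mu> t \<psi> x = exp (- \<mu> * t) * Hop t \<psi> x"
proof -
  have "(4 * pi * t) powr (- real CARD('n) / 2) = 1 / (4 * pi * t) powr (real CARD('n) / 2)"
    using assms by (simp add: powr_minus_divide)
  then show ?thesis
    using assms unfolding heat_sg_def Hop_def gauss_kernel_def
    by (simp add: integral_mult_right_zero[symmetric] mult_ac)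
qed

lemma Hop_square_nn_integral_le:
  fixes \<psi> :: "real^'n \<Rightarrow> real"
  assumes [measurable]: "\<psi> \<in> borel_measurable borel" and "\<iota> > 0"
  shows "(\<integral>\<^sup>+x. ennreal ((Hop \<iota> \<psi> x)\<^sup>2) \<partial>lborel) \<le> (\<integral>\<^sup>+y. ennreal ((\<psi> y)\<^sup>2) \<partial>lborel)"
proof -
  let ?k = "gauss_kernel \<iota> :: real^'n \<Rightarrow> real"
  have k_nonneg: "?k z \<ge> 0" for z
    by (simp add: gauss_kernel_def)
  have [measurable]: "?k \<in> borel_measurable borel"
    unfolding gauss_kernel_def[abs_def] by measurable
  have pointwise: "ennreal ((Hop \<iota> \<psi> x)\<^sup>2) \<le> (\<integral>\<^sup>+y. ennreal (?k (x - y) * \<bar>\<psi> y\<bar>) \<partial>lborel)\<^sup>2" for x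
  proof -
    have "ennreal \<bar>Hop \<iota> \<psi> x\<bar> \<le> (\<integral>\<^sup>+y. ennreal \<bar>?k (x - y) * \<psi> y\<bar> \<partial>lborel)"
      unfolding Hop_def by (rule abs_integral_le_nn_integral_abs)
    also have "\<dots> = (\<integral>\<^sup>+y. ennreal (?k (x - y) * \<bar>\<psi> y\<bar>) \<partial>lborel)"
      using k_nonneg by (simp add: abs_mult)
    finally show ?thesis
      by (rule ennreal_power2_le_of_abs_le)
  qed
  have "(\<integral>\<^sup>+x. ennreal ((Hop \<iota> \<psi> x)\<^sup>2) \<partial>lborel)
      \<le> (\<integral>\<^sup>+x. (\<integral>\<^sup>+y. ennreal (?k (x - y) * \<bar>\<psi> y\<bar>) \<partial>lborel)\<^sup>2 \<partial>lborel)"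
    by (intro nn_integral_mono pointwise)
  also have "\<dots> \<le> ennreal 1 * ennreal 1 * (\<integral>\<^sup>+y. ennreal ((\<psi> y)\<^sup>2) \<partial>lborel)"
    using assms k_nonneg nn_integral_gauss_kernel
    by (intro nn_integral_convolution_square_le) auto
  finally show ?thesis by simp
qed

lemma heat_sg_square_nn_integral_le:
  fixes \<psi> :: "real^'n \<Rightarrow> real"
  assumes [measurable]: "\<psi> \<in> borel_measurable borel" and "t \<ge> 0"
  shows "(\<integral>\<^sup>+x. ennreal ((heat_sg \<mu> t \<psi> x)\<^sup>2) \<partial>lborel)
          \<le> ennreal ((exp (- \<mu> * t))\<^sup>2) * (\<integral>\<^sup>+y. ennreal ((\<psi> y)\<^sup>2) \<partial>lborel)"
proof (cases "t = 0")
  case False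
  with assms(2) have "t > 0" by simp
  have [measurable]: "Hop t \<psi> \<in> borel_measurable lborel"
    unfolding Hop_def gauss_kernel_def by measurable
  have "(\<integral>\<^sup>+x. ennreal ((heat_sg \<mu> t \<psi> x)\<^sup>2) \<partial>lborel)
      = ennreal ((exp (- \<mu> * t))\<^sup>2) * (\<integral>\<^sup>+x. ennreal ((Hop t \<psi> x)\<^sup>2) \<partial>lborel)"
    using \<open>t > 0\<close> by (subst nn_integral_cmult[symmetric])
      (auto simp: heat_sg_eq_Hop power_mult_distrib ennreal_mult)
  also have "\<dots> \<le> ennreal ((exp (- \<mu> * t))\<^sup>2) * (\<integral>\<^sup>+y. ennreal ((\<psi> y)\<^sup>2) \<partial>lborel)"
    using \<open>t > 0\<close> by (intro mult_left_mono Hop_square_nn_integral_le) auto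
  finally show ?thesis .
qed (simp add: heat_sg_def)

lemma measurable_heat_sg_Duhamel:
  fixes \<Psi> :: "real \<Rightarrow> real^'n \<Rightarrow> real"
  assumes [measurable]: "(\<lambda>p. \<Psi> (fst p) (snd p)) \<in> borel_measurable (lborel \<Otimes>\<^sub>M lborel)"
  shows "(\<lambda>p. heat_sg \<mu> (t - fst p) (\<Psi> (fst p)) (snd p)) \<in> borel_measurable (lborel \<Otimes>\<^sub>M lborel)"
proof -
  have "(\<lambda>q. (fst (fst q), snd q))
      \<in> measurable ((lborel \<Otimes>\<^sub>M lborel) \<Otimes>\<^sub>M lborel) (lborel \<Otimes>\<^sub>M (lborel :: (real^'n) measure))"
    by (intro measurable_Pair measurable_compose[OF measurable_fst measurable_fst] measurable_snd)
  from measurable_compose[OF this assms]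
  have [measurable]: "(\<lambda>q. \<Psi> (fst (fst q)) (snd q)) \<in> borel_measurable ((lborel \<Otimes>\<^sub>M lborel) \<Otimes>\<^sub>M lborel)"
    by simp
  have [measurable]: "(\<lambda>p. \<integral>y. \<Psi> (fst p) y * exp (- (norm (snd p - y))\<^sup>2 / (4 * (t - fst p))) \<partial>lborel)
      \<in> borel_measurable (lborel \<Otimes>\<^sub>M lborel)"
    by (rule lborel.borel_measurable_lebesgue_integral) (simp add: split_beta', measurable)
  show ?thesis
    unfolding heat_sg_def by measurable
qed

lemma measurable_heat_sg:
  fixes \<psi> :: "real^'n \<Rightarrow> real"
  assumes [measurable]: "\<psi> \<in> borel_measurable borel"
  shows "heat_sg \<mu> t \<psi> \<in> borel_measurable borel"
proof -
  have "(\<lambda>p. heat_sg \<mu> (t - fst p) ((\<lambda>s. \<psi>) (fst p)) (snd p)) \<in> borel_measurable (lborel \<Otimes>\<^sub>M lborel)"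
    by (rule measurable_heat_sg_Duhamel) measurable
  from measurable_Pair2[OF this[unfolded split_beta'[symmetric]], of 0] show ?thesis
    by simp
qed

lemma measurable_Hop_family:
  fixes \<Psi> :: "real \<Rightarrow> real^'n \<Rightarrow> real"
  assumes [measurable]: "(\<lambda>p. \<Psi> (fst p) (snd p)) \<in> borel_measurable (lborel \<Otimes>\<^sub>M lborel)"
  shows "(\<lambda>p. Hop \<iota> (\<Psi> (fst p)) (snd p)) \<in> borel_measurable (lborel \<Otimes>\<^sub>M lborel)"
proof -
  have "(\<lambda>q. (fst (fst q), snd q))
      \<in> measurable ((lborel \<Otimes>\<^sub>M lborel) \<Otimes>\<^sub>M lborel) (lborel \<Otimes>\<^sub>M (lborel :: (real^'n) measure))"
    by (intro measurable_Pair measurable_compose[OF measurable_fst measurable_fst] measurable_snd)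
  from measurable_compose[OF this assms]
  have [measurable]: "(\<lambda>q. \<Psi> (fst (fst q)) (snd q)) \<in> borel_measurable ((lborel \<Otimes>\<^sub>M lborel) \<Otimes>\<^sub>M lborel)"
    by simp
  show ?thesis
    unfolding Hop_def gauss_kernel_def
    by (rule lborel.borel_measurable_lebesgue_integral) (simp add: split_beta', measurable)
qed

text \<open>Pointwise majorant of the Duhamel term \<open>\<integral>\<^sub>0\<^sup>t S(t - s) \<Psi>(s) ds\<close>; unlike the term itself it is
  meaningful without any integrability in \<open>s\<close>.\<close>
definition heat_Duhamel_abs :: "real \<Rightarrow> real \<Rightarrow> (real \<Rightarrow> real^'n \<Rightarrow> real) \<Rightarrow> real^'n \<Rightarrow> ennreal" where
  "heat_Duhamel_abs \<mu> t \<Psi> x = (\<integral>\<^sup>+s. indicator {0..t} s * ennreal \<bar>heat_sg \<mu> (t - s) (\<Psi> s) x\<bar> \<partial>lborel)"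

lemma measurable_heat_Duhamel_abs:
  fixes \<Psi> :: "real \<Rightarrow> real^'n \<Rightarrow> real"
  assumes "(\<lambda>p. \<Psi> (fst p) (snd p)) \<in> borel_measurable (lborel \<Otimes>\<^sub>M lborel)"
  shows "heat_Duhamel_abs \<mu> t \<Psi> \<in> borel_measurable lborel"
proof -
  define H where "H s x = ennreal \<bar>heat_sg \<mu> (t - s) (\<Psi> s) x\<bar>" for s x
  have [measurable]: "case_prod H \<in> borel_measurable (lborel \<Otimes>\<^sub>M lborel)"
    using measurable_heat_sg_Duhamel[OF assms, of \<mu> t] unfolding H_def split_beta' by measurable
  show ?thesis
    unfolding heat_Duhamel_abs_def H_def[symmetric] by measurable
qed

lemma nn_integral_heat_Duhamel_abs_le:
  fixes \<Psi> :: "real \<Rightarrow> real^'n \<Rightarrow> real"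
  assumes [measurable]: "(\<lambda>p. \<Psi> (fst p) (snd p)) \<in> borel_measurable (lborel \<Otimes>\<^sub>M lborel)"
    and [measurable]: "V \<in> borel_measurable borel"
    and V_pos: "\<And>s. s \<in> {0..t} \<Longrightarrow> V s > 0"
    and \<Psi>_le: "\<And>s. s \<in> {0..t} \<Longrightarrow> (\<integral>\<^sup>+x. ennreal ((\<Psi> s x)\<^sup>2) \<partial>lborel) \<le> ennreal ((V s)\<^sup>2)"
  shows "(\<integral>\<^sup>+x. (heat_Duhamel_abs \<mu> t \<Psi> x)\<^sup>2 \<partial>lborel)
      \<le> (\<integral>\<^sup>+s. indicator {0..t} s * ennreal (exp (- \<mu> * (t - s)) * V s) \<partial>lborel)\<^sup>2"
  unfolding heat_Duhamel_abs_def
proof (rule nn_integral_Minkowski_integral)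
  show "case_prod (\<lambda>s x. ennreal \<bar>heat_sg \<mu> (t - s) (\<Psi> s) x\<bar>) \<in> borel_measurable (lborel \<Otimes>\<^sub>M lborel)"
    using measurable_heat_sg_Duhamel[OF assms(1), of \<mu> t] by (simp add: split_beta')
next
  fix s
  assume s: "s \<in> {0..t}"
  have [measurable]: "\<Psi> s \<in> borel_measurable borel"
    using measurable_Pair2[OF assms(1), of s] by simp
  have "(\<integral>\<^sup>+x. (ennreal \<bar>heat_sg \<mu> (t - s) (\<Psi> s) x\<bar>)\<^sup>2 \<partial>lborel)
      = (\<integral>\<^sup>+x. ennreal ((heat_sg \<mu> (t - s) (\<Psi> s) x)\<^sup>2) \<partial>lborel)"
    by (simp add: ennreal_power)
  also have "\<dots> \<le> ennreal ((exp (- \<mu> * (t - s)))\<^sup>2) * ennreal ((V s)\<^sup>2)"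
    using s by (intro order.trans[OF heat_sg_square_nn_integral_le] mult_left_mono \<Psi>_le) auto
  also have "\<dots> = ennreal ((exp (- \<mu> * (t - s)) * V s)\<^sup>2)"
    by (simp add: ennreal_mult[symmetric] power_mult_distrib)
  finally show "(\<integral>\<^sup>+x. (ennreal \<bar>heat_sg \<mu> (t - s) (\<Psi> s) x\<bar>)\<^sup>2 \<partial>lborel)
      \<le> ennreal ((exp (- \<mu> * (t - s)) * V s)\<^sup>2)" .
  show "exp (- \<mu> * (t - s)) * V s > 0"
    using V_pos[OF s] by simp
qed measurable

section \<open>The state space and the phase space\<close>

lemma L2norm_nonneg: "L2norm h \<ge> 0"
  by (simp add: L2norm_def)

lemma nn_integral_power2_eq_L2norm:
  assumes "L2 h"
  shows "(\<integral>\<^sup>+x. ennreal ((h x)\<^sup>2) \<partial>lborel) = ennreal ((L2norm h)\<^sup>2)"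
  using assms unfolding L2_def L2norm_def by (subst nn_integral_eq_integral) auto

lemma L2norm_le_of_nn_integral_le:
  assumes "L2 h" "(\<integral>\<^sup>+x. ennreal ((h x)\<^sup>2) \<partial>lborel) \<le> ennreal (A\<^sup>2)" "A \<ge> 0"
  shows "L2norm h \<le> A"
  using assms L2norm_nonneg[of h]
  by (simp add: nn_integral_power2_eq_L2norm abs_le_square_iff[symmetric])

lemma L2norm_cong_AE:
  assumes "L2 a" "L2 b" "AE x in lborel. a x = b x"
  shows "L2norm a = L2norm b"
proof -
  have [measurable]: "a \<in> borel_measurable borel" "b \<in> borel_measurable borel"
    using assms by (auto simp: L2_def)
  have "(\<integral>x. (a x)\<^sup>2 \<partial>lborel) = (\<integral>x. (b x)\<^sup>2 \<partial>lborel)"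
    by (rule integral_cong_AE) (measurable, use assms(3) in auto)
  then show ?thesis
    by (simp add: L2norm_def)
qed

lemma L2_diff:
  assumes "L2 a" "L2 b"
  shows "L2 (a - b)"
proof -
  have [measurable]: "a \<in> borel_measurable borel" "b \<in> borel_measurable borel"
    using assms by (auto simp: L2_def)
  have bound: "(a x - b x)\<^sup>2 \<le> 2 * (a x)\<^sup>2 + 2 * (b x)\<^sup>2" for x
    using zero_le_power2[of "a x + b x"] by (simp add: power2_eq_square algebra_simps)
  have "integrable lborel (\<lambda>x. 2 * (a x)\<^sup>2 + 2 * (b x)\<^sup>2)"
    using assms by (auto simp: L2_def)
  then have "integrable lborel (\<lambda>x. (a x - b x)\<^sup>2)"
  proof (rule Bochner_Integration.integrable_bound)
    show "AE x in lborel. norm ((a x - b x)\<^sup>2) \<le> norm (2 * (a x)\<^sup>2 + 2 * (b x)\<^sup>2)"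
      using bound by (intro AE_I2) simp
  qed measurable
  then show ?thesis
    by (simp add: L2_def fun_diff_def)
qed

lemma L2norm_le_add_L2norm_diff:
  assumes "L2 a" "L2 b"
  shows "L2norm a \<le> L2norm b + L2norm (a - b)"
proof (rule L2norm_le_of_nn_integral_le)
  have "L2 (a - b)"
    using assms by (rule L2_diff)
  then have measurable: "b \<in> borel_measurable lborel" "a - b \<in> borel_measurable lborel"
    and bounds: "(\<integral>\<^sup>+x. ennreal (((a - b) x)\<^sup>2) \<partial>lborel) \<le> ennreal ((L2norm (a - b))\<^sup>2)"
      "(\<integral>\<^sup>+x. ennreal ((b x)\<^sup>2) \<partial>lborel) \<le> ennreal ((L2norm b)\<^sup>2)"
    using assms by (simp_all only: L2_def nn_integral_power2_eq_L2norm order_refl)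
  have "(\<integral>\<^sup>+x. ennreal ((a x)\<^sup>2) \<partial>lborel) = (\<integral>\<^sup>+x. ennreal ((b x + (a - b) x)\<^sup>2) \<partial>lborel)"
    by simp
  also have "(\<integral>\<^sup>+x. ennreal ((b x + (a - b) x)\<^sup>2) \<partial>lborel) \<le> ennreal ((L2norm b + L2norm (a - b))\<^sup>2)"
    by (rule nn_integral_power2_add_le_real[OF measurable bounds(2) L2norm_nonneg bounds(1) L2norm_nonneg])
  finally show "(\<integral>\<^sup>+x. ennreal ((a x)\<^sup>2) \<partial>lborel) \<le> ennreal ((L2norm b + L2norm (a - b))\<^sup>2)" .
qed (rule assms(1), intro add_nonneg_nonneg L2norm_nonneg)

lemma abs_L2norm_diff_le:
  assumes "L2 a" "L2 b"
  shows "\<bar>L2norm a - L2norm b\<bar> \<le> L2norm (a - b)"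
proof -
  have "L2norm (b - a) = L2norm (a - b)"
    by (simp add: L2norm_def power2_commute)
  then show ?thesis
    using L2norm_le_add_L2norm_diff[OF assms] L2norm_le_add_L2norm_diff[OF assms(2,1)] by linarith
qed

lemma continuous_on_L2norm:
  assumes "L2_continuous_on S w" "\<And>t. t \<in> S \<Longrightarrow> L2 (w t)"
  shows "continuous_on S (\<lambda>t. L2norm (w t))"
  unfolding continuous_on_iff
proof (intro ballI allI impI)
  fix t e :: real
  assume "t \<in> S" "e > 0"
  with assms(1) obtain d where "d > 0" and d: "\<And>s. s \<in> S \<Longrightarrow> \<bar>s - t\<bar> < d \<Longrightarrow> L2norm (w s - w t) < e"
    unfolding L2_continuous_on_def by blast
  have "dist (L2norm (w s)) (L2norm (w t)) < e" if "s \<in> S" "dist s t < d" for s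
    using abs_L2norm_diff_le[OF assms(2)[OF \<open>s \<in> S\<close>] assms(2)[OF \<open>t \<in> S\<close>]] d[OF that(1)] that(2)
    by (simp add: dist_real_def)
  with \<open>d > 0\<close> show "\<exists>d>0. \<forall>s\<in>S. dist s t < d \<longrightarrow> dist (L2norm (w s)) (L2norm (w t)) < e"
    by blast
qed

lemma L2norm_le_Cnorm:
  assumes "\<phi> \<in> Cspace \<tau>" "\<theta> \<in> {-\<tau>..0}"
  shows "L2norm (\<phi> \<theta>) \<le> Cnorm \<tau> \<phi>"
proof -
  have "continuous_on {-\<tau>..0} (\<lambda>\<theta>. L2norm (\<phi> \<theta>))"
    using assms(1) by (intro continuous_on_L2norm) (auto simp: Cspace_def)
  then have "bdd_above ((\<lambda>\<theta>. L2norm (\<phi> \<theta>)) ` {-\<tau>..0})"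
    by (intro bounded_imp_bdd_above compact_imp_bounded compact_continuous_image) auto
  then show ?thesis
    unfolding Cnorm_def by (rule cSUP_upper[OF assms(2)])
qed

lemma L2_continuous_on_shift:
  assumes "L2_continuous_on S w" "\<And>\<theta>. \<theta> \<in> T \<Longrightarrow> t + \<theta> \<in> S"
  shows "L2_continuous_on T (\<lambda>\<theta>. w (t + \<theta>))"
  unfolding L2_continuous_on_def
proof (intro ballI allI impI)
  fix \<theta> e :: real
  assume "\<theta> \<in> T" "e > 0"
  with assms obtain d where "d > 0"
    and d: "\<And>s. s \<in> S \<Longrightarrow> \<bar>s - (t + \<theta>)\<bar> < d \<Longrightarrow> L2norm (w s - w (t + \<theta>)) < e"
    unfolding L2_continuous_on_def by blast
  then show "\<exists>d>0. \<forall>s\<in>T. \<bar>s - \<theta>\<bar> < d \<longrightarrow> L2norm (w (t + s) - w (t + \<theta>)) < e"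
    using assms(2) by (intro exI[of _ d]) auto
qed

lemma mild_solution_segment_in_Cspace:
  assumes "mild_solution \<tau> \<mu> \<sigma> \<iota> f g \<phi> u" "t \<ge> 0"
  shows "(\<lambda>\<theta>. u (t + \<theta>)) \<in> Cspace \<tau>"
  using assms unfolding Cspace_def mild_solution_def
  by (auto intro: L2_continuous_on_shift)

lemma Cnorm_nonneg:
  assumes "\<phi> \<in> Cspace \<tau>" "\<tau> \<ge> 0"
  shows "Cnorm \<tau> \<phi> \<ge> 0"
  using L2norm_le_Cnorm[OF assms(1), of 0] L2norm_nonneg[of "\<phi> 0"] assms(2) by simp

lemma mild_solution_L2norm_history_le:
  assumes "\<phi> \<in> Cspace \<tau>" "mild_solution \<tau> \<mu> \<sigma> \<iota> f g \<phi> w" "\<theta> \<in> {-\<tau>..0}"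
  shows "L2norm (w \<theta>) \<le> Cnorm \<tau> \<phi>"
proof -
  have "L2norm (w \<theta>) = L2norm (\<phi> \<theta>)"
    using assms by (intro L2norm_cong_AE) (auto simp: mild_solution_def Cspace_def)
  also have "\<dots> \<le> Cnorm \<tau> \<phi>"
    using assms(1,3) by (rule L2norm_le_Cnorm)
  finally show ?thesis .
qed

section \<open>Decay of mild solutions\<close>

locale delay_heat_equation =
  fixes \<tau> \<mu> \<sigma> \<iota> Nbar :: real
    and f :: "(real^'n \<Rightarrow> real) \<Rightarrow> real^'n \<Rightarrow> real"
    and g :: "real^'n \<Rightarrow> real"
  assumes \<tau>_pos: "\<tau> > 0" and \<mu>_pos: "\<mu> > 0" and \<sigma>_pos: "\<sigma> > 0" and \<iota>_pos: "\<iota> > 0"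
    and L2_g: "L2 g" and Nbar_pos: "Nbar > 0"
    and L2_f: "\<And>\<psi>. L2 \<psi> \<Longrightarrow> L2 (f \<psi>)"
    and L2norm_f_le: "\<And>\<psi>. L2 \<psi> \<Longrightarrow> L2norm (f \<psi>) \<le> Nbar"
begin

abbreviation \<kappa> :: real where "\<kappa> \<equiv> \<sigma> * exp (\<mu> * \<tau>)"

abbreviation M :: real where "M \<equiv> Nbar + L2norm g"

abbreviation forcing :: "(real^'n \<Rightarrow> real) \<Rightarrow> real^'n \<Rightarrow> real" where
  "forcing \<psi> \<equiv> \<lambda>y. Hop \<iota> (f \<psi>) y + g y"

lemma measurable_g [measurable]: "g \<in> borel_measurable borel"
  using L2_g by (simp add: L2_def)

lemma nn_integral_forcing_le:
  assumes "L2 \<psi>"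
  shows "(\<integral>\<^sup>+y. ennreal ((forcing \<psi> y)\<^sup>2) \<partial>lborel) \<le> ennreal (M\<^sup>2)"
proof (rule nn_integral_power2_add_le_real)
  have [measurable]: "f \<psi> \<in> borel_measurable borel"
    using L2_f[OF assms] by (simp add: L2_def)
  show "Hop \<iota> (f \<psi>) \<in> borel_measurable lborel"
    unfolding Hop_def gauss_kernel_def by measurable
  show "g \<in> borel_measurable lborel"
    by simp
  have "(\<integral>\<^sup>+y. ennreal ((Hop \<iota> (f \<psi>) y)\<^sup>2) \<partial>lborel) \<le> ennreal ((L2norm (f \<psi>))\<^sup>2)"
    using Hop_square_nn_integral_le[of "f \<psi>" \<iota>] \<iota>_pos L2_f[OF assms]
    by (simp add: nn_integral_power2_eq_L2norm)
  also have "\<dots> \<le> ennreal (Nbar\<^sup>2)"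
    using L2norm_f_le[OF assms] L2norm_nonneg by (intro ennreal_leI power_mono)
  finally show "(\<integral>\<^sup>+y. ennreal ((Hop \<iota> (f \<psi>) y)\<^sup>2) \<partial>lborel) \<le> ennreal (Nbar\<^sup>2)" .
  show "(\<integral>\<^sup>+y. ennreal ((g y)\<^sup>2) \<partial>lborel) \<le> ennreal ((L2norm g)\<^sup>2)"
    using L2_g by (simp add: nn_integral_power2_eq_L2norm)
qed (use Nbar_pos L2norm_nonneg in auto)

lemma mild_solution_measurable_delayed:
  assumes "mild_solution \<tau> \<mu> \<sigma> \<iota> f g \<phi> w"
  shows "(\<lambda>p. w (fst p - \<tau>) (snd p)) \<in> borel_measurable (lborel \<Otimes>\<^sub>M lborel)"
    and "(\<lambda>p. forcing (w (fst p - \<tau>)) (snd p)) \<in> borel_measurable (lborel \<Otimes>\<^sub>M lborel)"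
proof -
  have [measurable]: "(\<lambda>(s, x). w s x) \<in> borel_measurable (lborel \<Otimes>\<^sub>M lborel)"
    and measurable_f: "(\<lambda>(s, x). f (w s) x) \<in> borel_measurable (lborel \<Otimes>\<^sub>M lborel)"
    using assms by (simp_all add: mild_solution_def)
  show [measurable]: "(\<lambda>p. w (fst p - \<tau>) (snd p)) \<in> borel_measurable (lborel \<Otimes>\<^sub>M lborel)"
    by (rule measurable_time_shift) measurable
  have [measurable]: "(\<lambda>p. f (w (fst p - \<tau>)) (snd p)) \<in> borel_measurable (lborel \<Otimes>\<^sub>M lborel)"
    using measurable_time_shift[OF measurable_f] by simp
  have [measurable]: "(\<lambda>p. Hop \<iota> (f (w (fst p - \<tau>))) (snd p)) \<in> borel_measurable (lborel \<Otimes>\<^sub>M lborel)"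
    by (rule measurable_Hop_family) measurable
  show "(\<lambda>p. forcing (w (fst p - \<tau>)) (snd p)) \<in> borel_measurable (lborel \<Otimes>\<^sub>M lborel)"
    by measurable
qed

lemma mild_solution_abs_le:
  assumes "mild_solution \<tau> \<mu> \<sigma> \<iota> f g \<phi> w" "t > 0"
  shows "AE x in lborel. ennreal \<bar>w t x\<bar> \<le> ennreal \<bar>heat_sg \<mu> t (\<phi> 0) x\<bar>
    + ennreal \<sigma> * heat_Duhamel_abs \<mu> t (\<lambda>s. w (s - \<tau>)) x + heat_Duhamel_abs \<mu> t (\<lambda>s. forcing (w (s - \<tau>))) x"
proof -
  have "AE x in lborel. w t x = heat_sg \<mu> t (\<phi> 0) x
      + \<sigma> * (LINT s:{0..t}|lborel. heat_sg \<mu> (t - s) (w (s - \<tau>)) x)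
      + (LINT s:{0..t}|lborel. heat_sg \<mu> (t - s) (forcing (w (s - \<tau>))) x)"
    using assms by (simp add: mild_solution_def)
  then show ?thesis
    by eventually_elim (use \<sigma>_pos in \<open>simp add: heat_Duhamel_abs_def abs_Duhamel_sum_le\<close>)
qed

lemma nn_integral_Duhamel_delayed_le:
  fixes w :: "real \<Rightarrow> real^'n \<Rightarrow> real" and V :: "real \<Rightarrow> real"
  assumes sol: "mild_solution \<tau> \<mu> \<sigma> \<iota> f g \<phi> w"
    and [measurable]: "V \<in> borel_measurable borel"
    and V_pos: "\<And>s. s \<in> {0..t} \<Longrightarrow> V s > 0"
    and past_le: "\<And>s. s \<in> {0..t} \<Longrightarrow> L2norm (w (s - \<tau>)) \<le> V s"
  shows "(\<integral>\<^sup>+x. (heat_Duhamel_abs \<mu> t (\<lambda>s. w (s - \<tau>)) x)\<^sup>2 \<partial>lborel)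
    \<le> (\<integral>\<^sup>+s. indicator {0..t} s * ennreal (exp (- \<mu> * (t - s)) * V s) \<partial>lborel)\<^sup>2"
proof (rule nn_integral_heat_Duhamel_abs_le)
  fix s
  assume s: "s \<in> {0..t}"
  then have "L2 (w (s - \<tau>))"
    using sol by (auto simp: mild_solution_def)
  then show "(\<integral>\<^sup>+x. ennreal ((w (s - \<tau>) x)\<^sup>2) \<partial>lborel) \<le> ennreal ((V s)\<^sup>2)"
    using power_mono[OF past_le[OF s] L2norm_nonneg, of 2]
    by (simp add: nn_integral_power2_eq_L2norm ennreal_leI)
qed (use V_pos mild_solution_measurable_delayed[OF sol] in measurable)

lemma nn_integral_Duhamel_forcing_le:
  fixes w :: "real \<Rightarrow> real^'n \<Rightarrow> real"
  assumes sol: "mild_solution \<tau> \<mu> \<sigma> \<iota> f g \<phi> w" and "t \<ge> 0"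
  shows "(\<integral>\<^sup>+x. (heat_Duhamel_abs \<mu> t (\<lambda>s. forcing (w (s - \<tau>))) x)\<^sup>2 \<partial>lborel) \<le> ennreal ((M / \<mu>)\<^sup>2)"
proof -
  have "M > 0"
    using Nbar_pos L2norm_nonneg[of g] by simp
  have "(\<integral>\<^sup>+x. (heat_Duhamel_abs \<mu> t (\<lambda>s. forcing (w (s - \<tau>))) x)\<^sup>2 \<partial>lborel)
      \<le> (\<integral>\<^sup>+s. indicator {0..t} s * ennreal (exp (- \<mu> * (t - s)) * M) \<partial>lborel)\<^sup>2"
  proof (rule nn_integral_heat_Duhamel_abs_le)
    fix s
    assume "s \<in> {0..t}"
    with sol show "(\<integral>\<^sup>+x. ennreal ((forcing (w (s - \<tau>)) x)\<^sup>2) \<partial>lborel) \<le> ennreal (M\<^sup>2)"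
      by (intro nn_integral_forcing_le) (auto simp: mild_solution_def)
  qed (use \<open>M > 0\<close> mild_solution_measurable_delayed[OF sol] in auto)
  also have "\<dots> \<le> (ennreal (M / \<mu>))\<^sup>2"
    using nn_integral_exp_Duhamel_le[of \<mu> 0 0 M t \<tau>] \<mu>_pos \<open>M > 0\<close> \<open>t \<ge> 0\<close>
    by (intro power_mono) simp_all
  finally show ?thesis
    using \<open>M > 0\<close> \<mu>_pos by (simp add: ennreal_power)
qed

lemma mild_solution_L2norm_le:
  fixes w :: "real \<Rightarrow> real^'n \<Rightarrow> real" and V :: "real \<Rightarrow> real"
  assumes sol: "mild_solution \<tau> \<mu> \<sigma> \<iota> f g \<phi> w" and "L2 (\<phi> 0)" and "t > 0"
    and "V \<in> borel_measurable borel"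
    and "\<And>s. s \<in> {0..t} \<Longrightarrow> V s > 0"
    and "\<And>s. s \<in> {0..t} \<Longrightarrow> L2norm (w (s - \<tau>)) \<le> V s"
    and J: "(\<integral>\<^sup>+s. indicator {0..t} s * ennreal (exp (- \<mu> * (t - s)) * V s) \<partial>lborel) \<le> ennreal J" "J \<ge> 0"
  shows "L2norm (w t) \<le> exp (- \<mu> * t) * L2norm (\<phi> 0) + \<sigma> * J + M / \<mu>"
proof -
  define a where "a x = ennreal \<bar>heat_sg \<mu> t (\<phi> 0) x\<bar>" for x
  define b where "b = heat_Duhamel_abs \<mu> t (\<lambda>s. w (s - \<tau>))"
  define c where "c = heat_Duhamel_abs \<mu> t (\<lambda>s. forcing (w (s - \<tau>)))"
  note [measurable] = mild_solution_measurable_delayed[OF sol]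
  have [measurable]: "\<phi> 0 \<in> borel_measurable borel"
    using \<open>L2 (\<phi> 0)\<close> by (simp add: L2_def)
  have [measurable]: "a \<in> borel_measurable lborel"
    unfolding a_def using measurable_heat_sg[of "\<phi> 0" \<mu> t] by measurable
  have [measurable]: "b \<in> borel_measurable lborel"
    unfolding b_def by (rule measurable_heat_Duhamel_abs) measurable
  have [measurable]: "c \<in> borel_measurable lborel"
    unfolding c_def by (rule measurable_heat_Duhamel_abs) measurable
  have a_le: "(\<integral>\<^sup>+x. (a x)\<^sup>2 \<partial>lborel) \<le> ennreal ((exp (- \<mu> * t) * L2norm (\<phi> 0))\<^sup>2)"
    using heat_sg_square_nn_integral_le[of "\<phi> 0" t \<mu>] \<open>t > 0\<close> \<open>L2 (\<phi> 0)\<close>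
    by (simp add: a_def ennreal_power nn_integral_power2_eq_L2norm ennreal_mult[symmetric] power_mult_distrib)
  have "(\<integral>\<^sup>+x. (b x)\<^sup>2 \<partial>lborel) \<le> (ennreal J)\<^sup>2"
    unfolding b_def using nn_integral_Duhamel_delayed_le[OF sol assms(4-6)] J(1)
    by (meson order.trans power_mono zero_le)
  then have b_le: "(\<integral>\<^sup>+x. (ennreal \<sigma> * b x)\<^sup>2 \<partial>lborel) \<le> ennreal ((\<sigma> * J)\<^sup>2)"
    using \<sigma>_pos \<open>J \<ge> 0\<close>
    by (simp add: power_mult_distrib nn_integral_cmult ennreal_power ennreal_mult mult_left_mono)
  have "(\<integral>\<^sup>+x. ennreal ((w t x)\<^sup>2) \<partial>lborel) \<le> (\<integral>\<^sup>+x. (a x + ennreal \<sigma> * b x + c x)\<^sup>2 \<partial>lborel)"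
    using mild_solution_abs_le[OF sol \<open>t > 0\<close>]
    by (intro nn_integral_mono_AE, eventually_elim) (simp add: a_def b_def c_def ennreal_power2_le_of_abs_le)
  also have "\<dots> \<le> ennreal ((exp (- \<mu> * t) * L2norm (\<phi> 0) + \<sigma> * J + M / \<mu>)\<^sup>2)"
  proof (rule nn_integral_power2_add_le)
    show "(\<integral>\<^sup>+x. (a x + ennreal \<sigma> * b x)\<^sup>2 \<partial>lborel)
        \<le> ennreal ((exp (- \<mu> * t) * L2norm (\<phi> 0) + \<sigma> * J)\<^sup>2)"
      by (rule nn_integral_power2_add_le[OF _ _ a_le _ b_le])
        (use \<open>J \<ge> 0\<close> \<sigma>_pos L2norm_nonneg[of "\<phi> 0"] in simp_all)
    show "(\<integral>\<^sup>+x. (c x)\<^sup>2 \<partial>lborel) \<le> ennreal ((M / \<mu>)\<^sup>2)"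
      unfolding c_def using sol \<open>t > 0\<close> by (simp add: nn_integral_Duhamel_forcing_le)
  qed (use \<open>J \<ge> 0\<close> \<sigma>_pos \<mu>_pos Nbar_pos L2norm_nonneg[of "\<phi> 0"] L2norm_nonneg[of g] in simp_all)
  finally show ?thesis
    using sol \<open>t > 0\<close> \<tau>_pos L2norm_nonneg[of "\<phi> 0"] \<sigma>_pos \<mu>_pos Nbar_pos L2norm_nonneg[of g] \<open>J \<ge> 0\<close>
    by (intro L2norm_le_of_nn_integral_le) (auto simp: mild_solution_def)
qed

lemma stationary_supersolution:
  assumes "\<kappa> < \<mu>"
  shows "\<sigma> * (M / (\<mu> - \<kappa>)) + M \<le> \<mu> * (M / (\<mu> - \<kappa>))"
proof -
  define L where "L = M / (\<mu> - \<kappa>)"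
  have "L \<ge> 0"
    using assms Nbar_pos L2norm_nonneg[of g] by (simp add: L_def)
  moreover have "\<sigma> \<le> \<kappa>"
    using \<sigma>_pos \<mu>_pos \<tau>_pos by simp
  ultimately have "\<sigma> * L \<le> \<kappa> * L"
    by (rule mult_right_mono[rotated])
  moreover have "(\<mu> - \<kappa>) * L = M"
    using assms by (simp add: L_def)
  ultimately show ?thesis
    unfolding L_def[symmetric] by (simp add: algebra_simps)
qed

lemma mild_solution_L2norm_exp_step:
  assumes sol: "mild_solution \<tau> \<mu> \<sigma> \<iota> f g \<phi> w" and "L2 (\<phi> 0)" "L2norm (\<phi> 0) \<le> R"
    and "\<kappa> < \<mu>" "t > 0" "0 \<le> A" and A_ge: "R + exp (- \<kappa> * \<tau>) * A \<le> A"
    and past: "\<And>s. s \<in> {0..t} \<Longrightarrow> L2norm (w (s - \<tau>)) \<le> A * exp (- (\<mu> - \<kappa>) * (s - \<tau>)) + M / (\<mu> - \<kappa>)"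
  shows "L2norm (w t) \<le> A * exp (- (\<mu> - \<kappa>) * t) + M / (\<mu> - \<kappa>)"
proof -
  define \<nu> where "\<nu> = \<mu> - \<kappa>"
  define L where "L = M / \<nu>"
  define J where "J = A * exp (\<nu> * \<tau>) / \<kappa> * exp (- \<nu> * t) + L / \<mu>"
  have "\<nu> > 0" "\<kappa> > 0"
    using \<open>\<kappa> < \<mu>\<close> \<sigma>_pos by (simp_all add: \<nu>_def)
  have "M > 0"
    using Nbar_pos L2norm_nonneg[of g] by simp
  then have "L > 0"
    using \<open>\<nu> > 0\<close> by (simp add: L_def)
  have J_nonneg: "J \<ge> 0"
    using \<open>0 \<le> A\<close> \<open>\<kappa> > 0\<close> \<open>L > 0\<close> \<mu>_pos by (simp add: J_def)
  have "(\<integral>\<^sup>+s. indicator {0..t} s * ennreal (exp (- \<mu> * (t - s)) * (A * exp (- \<nu> * (s - \<tau>)) + L)) \<partial>lborel)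
      \<le> ennreal J"
    using nn_integral_exp_Duhamel_le[of \<mu> \<nu> A L t \<tau>] \<mu>_pos \<open>\<kappa> > 0\<close> \<open>0 \<le> A\<close> \<open>L > 0\<close> \<open>t > 0\<close>
    by (simp add: J_def \<nu>_def)
  with sol \<open>L2 (\<phi> 0)\<close> \<open>t > 0\<close> J_nonneg
  have "L2norm (w t) \<le> exp (- \<mu> * t) * L2norm (\<phi> 0) + \<sigma> * J + M / \<mu>"
    using \<open>0 \<le> A\<close> \<open>L > 0\<close> past
    by (intro mild_solution_L2norm_le[where V = "\<lambda>s. A * exp (- \<nu> * (s - \<tau>)) + L"])
      (auto simp: \<nu>_def L_def add_nonneg_pos)
  also have "exp (- \<mu> * t) * L2norm (\<phi> 0) \<le> R * exp (- \<nu> * t)"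
  proof -
    have "exp (- \<mu> * t) \<le> exp (- \<nu> * t)"
      using mult_pos_pos[OF \<open>\<kappa> > 0\<close> \<open>t > 0\<close>] by (simp add: \<nu>_def algebra_simps)
    from mult_mono[OF this \<open>L2norm (\<phi> 0) \<le> R\<close>] show ?thesis
      using L2norm_nonneg[of "\<phi> 0"] by (simp add: mult.commute)
  qed
  also have "\<sigma> * J = exp (- \<kappa> * \<tau>) * A * exp (- \<nu> * t) + \<sigma> * L / \<mu>"
    \<comment> \<open>as \<open>\<sigma> exp(\<nu>\<tau>) = \<kappa> exp(-\<kappa>\<tau>)\<close>; the factor \<open>exp(-\<kappa>\<tau>) < 1\<close> is what closes the induction\<close>
    using \<sigma>_pos by (simp add: J_def \<nu>_def field_simps mult_exp_exp)
  also have "R * exp (- \<nu> * t) + (exp (- \<kappa> * \<tau>) * A * exp (- \<nu> * t) + \<sigma> * L / \<mu>) + M / \<mu>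
      = (R + exp (- \<kappa> * \<tau>) * A) * exp (- \<nu> * t) + (\<sigma> * L + M) / \<mu>"
    by (simp add: algebra_simps add_divide_distrib)
  also have "\<dots> \<le> A * exp (- \<nu> * t) + L"
    using A_ge stationary_supersolution[OF \<open>\<kappa> < \<mu>\<close>] \<mu>_pos
    by (intro add_mono) (simp_all add: L_def \<nu>_def divide_le_eq mult.commute)
  finally show ?thesis
    by (simp add: \<nu>_def L_def)
qed

lemma mild_solution_L2norm_decay:
  assumes "\<phi> \<in> Cspace \<tau>" and sol: "mild_solution \<tau> \<mu> \<sigma> \<iota> f g \<phi> w" and "Cnorm \<tau> \<phi> \<le> R"
    and "\<kappa> < \<mu>" "r \<ge> -\<tau>"
  shows "L2norm (w r) \<le> R / (1 - exp (- \<kappa> * \<tau>)) * exp (- (\<mu> - \<kappa>) * r) + M / (\<mu> - \<kappa>)"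
proof -
  define q where "q = exp (- \<kappa> * \<tau>)"
  define A where "A = R / (1 - q)"
  have "R \<ge> 0"
    using Cnorm_nonneg[OF assms(1)] \<tau>_pos \<open>Cnorm \<tau> \<phi> \<le> R\<close> by simp
  moreover have "q < 1"
    using \<sigma>_pos \<tau>_pos by (simp add: q_def)
  ultimately have "A \<ge> 0" and A_eq: "R + q * A = A"
    by (simp_all add: A_def field_simps)
  from \<open>r \<ge> -\<tau>\<close> \<tau>_pos have "L2norm (w r) \<le> A * exp (- (\<mu> - \<kappa>) * r) + M / (\<mu> - \<kappa>)"
  proof (induction r rule: method_of_steps)
    case (initial r)
    have "L2norm (w r) \<le> R"
      using mild_solution_L2norm_history_le[OF assms(1) sol initial] \<open>Cnorm \<tau> \<phi> \<le> R\<close> by simp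
    also have "R \<le> A"
      using A_eq \<open>A \<ge> 0\<close> by (metis le_add_same_cancel1 q_def exp_ge_zero mult_nonneg_nonneg)
    also have "A \<le> A * exp (- (\<mu> - \<kappa>) * r)"
      using initial \<open>\<kappa> < \<mu>\<close> \<open>A \<ge> 0\<close> by (intro mult_le_cancel_left1[THEN iffD2]) (auto simp: zero_le_mult_iff)
    finally have "L2norm (w r) \<le> A * exp (- (\<mu> - \<kappa>) * r)" .
    moreover have "M / (\<mu> - \<kappa>) > 0"
      using Nbar_pos L2norm_nonneg[of g] \<open>\<kappa> < \<mu>\<close> by simp
    ultimately show ?case
      by linarith
  next
    case (step t)
    have "L2 (\<phi> 0)" "L2norm (\<phi> 0) \<le> R"
      using assms(1) L2norm_le_Cnorm[OF assms(1), of 0] \<tau>_pos \<open>Cnorm \<tau> \<phi> \<le> R\<close>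
      by (simp_all add: Cspace_def)
    moreover have "R + exp (- \<kappa> * \<tau>) * A \<le> A"
      using A_eq by (simp add: q_def)
    ultimately show ?case
      using mild_solution_L2norm_exp_step[OF sol _ _ \<open>\<kappa> < \<mu>\<close> step(1) \<open>A \<ge> 0\<close> _ step(2)] by blast
  qed
  then show ?thesis
    by (simp add: A_def q_def)
qed

lemma mild_solution_Cnorm_segment_le:
  assumes "\<phi> \<in> Cspace \<tau>" "mild_solution \<tau> \<mu> \<sigma> \<iota> f g \<phi> w" "Cnorm \<tau> \<phi> \<le> R" "\<kappa> < \<mu>" "t \<ge> 0"
  shows "Cnorm \<tau> (\<lambda>\<theta>. w (t + \<theta>))
    \<le> R / (1 - exp (- \<kappa> * \<tau>)) * exp (- (\<mu> - \<kappa>) * (t - \<tau>)) + M / (\<mu> - \<kappa>)"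
  unfolding Cnorm_def
proof (rule cSUP_least)
  show "{-\<tau>..0} \<noteq> {}"
    using \<tau>_pos by simp
  fix \<theta>
  assume \<theta>: "\<theta> \<in> {-\<tau>..0}"
  have "R \<ge> 0"
    using Cnorm_nonneg[OF assms(1)] \<tau>_pos assms(3) by simp
  moreover have "exp (- \<kappa> * \<tau>) < 1"
    using \<sigma>_pos \<tau>_pos by simp
  ultimately have A_nonneg: "R / (1 - exp (- \<kappa> * \<tau>)) \<ge> 0"
    by simp
  have "exp (- (\<mu> - \<kappa>) * (t + \<theta>)) \<le> exp (- (\<mu> - \<kappa>) * (t - \<tau>))"
    using \<theta> \<open>\<kappa> < \<mu>\<close> by (simp add: mult_left_mono)
  from mult_left_mono[OF this A_nonneg]
  have "R / (1 - exp (- \<kappa> * \<tau>)) * exp (- (\<mu> - \<kappa>) * (t + \<theta>))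
      \<le> R / (1 - exp (- \<kappa> * \<tau>)) * exp (- (\<mu> - \<kappa>) * (t - \<tau>))" .
  with mild_solution_L2norm_decay[OF assms(1-4), of "t + \<theta>"] \<theta> \<open>t \<ge> 0\<close>
  show "L2norm (w (t + \<theta>))
      \<le> R / (1 - exp (- \<kappa> * \<tau>)) * exp (- (\<mu> - \<kappa>) * (t - \<tau>)) + M / (\<mu> - \<kappa>)"
    by simp
qed

end

theorem theorem2p1:
  fixes \<tau> \<mu> \<sigma> \<iota> Nbar :: real
    and g :: "real^'n \<Rightarrow> real"
    and f :: "(real^'n \<Rightarrow> real) \<Rightarrow> (real^'n \<Rightarrow> real)"
    and u :: "(real \<Rightarrow> real^'n \<Rightarrow> real) \<Rightarrow> real \<Rightarrow> real^'n \<Rightarrow> real"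
  assumes "\<tau> > 0" and "\<mu> > 0" and "\<sigma> > 0" and "\<iota> > 0"
    and "L2 g"
    and "Nbar > 0"
    and f_L2: "\<And>\<psi>. L2 \<psi> \<Longrightarrow> L2 (f \<psi>)"
    and f_bdd: "\<And>\<psi>. L2 \<psi> \<Longrightarrow> L2norm (f \<psi>) \<le> Nbar"
    and f_welldef: "\<And>\<psi>1 \<psi>2. L2 \<psi>1 \<Longrightarrow> L2 \<psi>2 \<Longrightarrow> (AE x in lborel. \<psi>1 x = \<psi>2 x)
                      \<Longrightarrow> (AE x in lborel. f \<psi>1 x = f \<psi>2 x)"
    and sol: "\<And>\<phi>. \<phi> \<in> Cspace \<tau> \<Longrightarrow> mild_solution \<tau> \<mu> \<sigma> \<iota> f g \<phi> (u \<phi>)"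
    and cond: "\<sigma> * exp (\<mu> * \<tau>) - \<mu> < 0"
  shows "\<forall>D. D \<subseteq> Cspace \<tau> \<and> (\<exists>R. \<forall>\<phi>\<in>D. Cnorm \<tau> \<phi> \<le> R) \<longrightarrow>
           (\<exists>T>0. \<forall>t\<ge>T. \<forall>\<phi>\<in>D.
              (\<lambda>\<theta>. u \<phi> (t + \<theta>)) \<in>
                {\<psi> \<in> Cspace \<tau>. Cnorm \<tau> \<psi> \<le>
                   2 * ((Nbar + L2norm g) / \<mu>
                        + (Nbar + L2norm g) * \<sigma> * exp (\<mu> * \<tau>) / (\<mu> * (\<mu> - \<sigma> * exp (\<mu> * \<tau>))))})"
proof (intro allI impI)
  interpret delay_heat_equation \<tau> \<mu> \<sigma> \<iota> Nbar f g
    using assms by unfold_locales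
  fix D :: "(real \<Rightarrow> real^'n \<Rightarrow> real) set"
  assume "D \<subseteq> Cspace \<tau> \<and> (\<exists>R. \<forall>\<phi>\<in>D. Cnorm \<tau> \<phi> \<le> R)"
  then obtain R where D: "D \<subseteq> Cspace \<tau>" and R: "\<And>\<phi>. \<phi> \<in> D \<Longrightarrow> Cnorm \<tau> \<phi> \<le> R"
    by blast
  have "\<kappa> < \<mu>" "\<mu> - \<kappa> > 0"
    using cond by simp_all
  moreover have "M / (\<mu> - \<kappa>) > 0"
    using \<open>Nbar > 0\<close> L2norm_nonneg[of g] cond by simp
  ultimately obtain T where "T > 0" and T: "\<And>t. t \<ge> T \<Longrightarrow>
      R / (1 - exp (- \<kappa> * \<tau>)) * exp (- (\<mu> - \<kappa>) * (t - \<tau>)) \<le> M / (\<mu> - \<kappa>)"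
    using exp_decay_eventually_le[of "\<mu> - \<kappa>" "M / (\<mu> - \<kappa>)" "R / (1 - exp (- \<kappa> * \<tau>))" \<tau>] by blast
  have "Cnorm \<tau> (\<lambda>\<theta>. u \<phi> (t + \<theta>)) \<le> 2 * (M / (\<mu> - \<kappa>))" if "t \<ge> T" "\<phi> \<in> D" for t \<phi>
  proof -
    have "Cnorm \<tau> (\<lambda>\<theta>. u \<phi> (t + \<theta>))
        \<le> R / (1 - exp (- \<kappa> * \<tau>)) * exp (- (\<mu> - \<kappa>) * (t - \<tau>)) + M / (\<mu> - \<kappa>)"
      using D sol R that \<open>T > 0\<close> by (intro mild_solution_Cnorm_segment_le \<open>\<kappa> < \<mu>\<close>) auto
    with T[OF that(1)] show ?thesis
      by linarith
  qed
  moreover have "2 * (M / (\<mu> - \<kappa>)) = 2 * (M / \<mu> + M * \<sigma> * exp (\<mu> * \<tau>) / (\<mu> * (\<mu> - \<kappa>)))"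
    using \<open>\<kappa> < \<mu>\<close> \<open>\<mu> > 0\<close> by (simp add: field_simps)
  ultimately show "\<exists>T>0. \<forall>t\<ge>T. \<forall>\<phi>\<in>D. (\<lambda>\<theta>. u \<phi> (t + \<theta>)) \<in> {\<psi> \<in> Cspace \<tau>. Cnorm \<tau> \<psi> \<le>
      2 * ((Nbar + L2norm g) / \<mu> + (Nbar + L2norm g) * \<sigma> * exp (\<mu> * \<tau>) / (\<mu> * (\<mu> - \<sigma> * exp (\<mu> * \<tau>))))}"
    using D sol \<open>T > 0\<close> by (intro exI[of _ T]) (auto intro!: mild_solution_segment_in_Cspace)
qed

end
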